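(* For every integer $n\ge1$, the sets $\mathcal T_n$ and $\mathcal T'_n$ are SW- and NE-deterministic. However, the sets $\mathcal T_n$ and $\mathcal T'_n$ are neither NW- nor SE-deterministic.
   Context: A set of Wang tiles is SW-deterministic if no two distinct tiles have the same bottom and left labels; NE-, NW-, SE-deterministic are defined analogously with (top, right), (top, left), (bottom, right) labels respectively. $V_n=\{(v_0,v_1,v_2)\in\mathbb{Z}^3: 0\le v_0\le v_1\le 1,\ v_1\le v_2\le n+1\}$, elements written as words $v_0v_1v_2$. A Wang tile is $t=(a,b,c,d)$ with $\mathrm{RIGHT}(t)=a$, $\mathrm{TOP}(t)=b$, $\mathrm{LEFT}(t)=c$, $\mathrm{BOTTOM}(t)=d$; $\hat t=(b,a,d,c)$, $\hat S=\{\hat t:t\in S\}$. Define (as (right, top, left, bottom)): $W_n=\{(11(i+1),11(j+1),11i,11j):1\le i,j\le n\}$; $b_n^i=(00(i+1),111,00i,11n)$, $B'_n=\{b_n^i:0\le i\le n\}$, $B_n=\{b_n^i:0\le i\le n-1\}$; $G_n=\{(01(i+1),111,00i,11(n+1)):0\le i\le n\}$; $Y_n=\{(01(i+1),112,01i,11(n+1)):1\le i\le n\}$; $A_n=\{(00(i+1),112,01i,11n):1\le i\le n\}$; $j_n^{k,l,r,s}=((0,k,l),(0,r,s),(0,s,r+n),(0,l,k+n))$ for $(k,l),(r,s)\in\{(0,0),(0,1),(1,1)\}$; $J'_n$ is the set of these 9 tiles and $J_n=J'_n\setminus\{j_n^{0,0,1,1},j_n^{1,1,0,0}\}$. $\mathcal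 T'_n=W_n\cup B'_n\cup G_n\cup Y_n\cup A_n\cup\hat B'_n\cup\hat G_n\cup\hat Y_n\cup\hat A_n\cup J'_n$ and $\mathcal T_n=W_n\cup B_n\cup G_n\cup Y_n\cup\hat B_n\cup\hat G_n\cup\hat Y_n\cup J_n$. *)

theory Defs
  imports Main
begin

text \<open>Labels are words v0 v1 v2, encoded as integer triples. A Wang tile
(right, top, left, bottom) is a 4-tuple of labels.\<close>

type_synonym label = "int \<times> int \<times> int"
type_synonym tile = "label \<times> label \<times> label \<times> label"

definition RIGHT :: "tile \<Rightarrow> label" where "RIGHT t = (case t of (a,b,c,d) \<Rightarrow> a)"
definition TOP :: "tile \<Rightarrow> label" where "TOP t = (case t of (a,b,c,d) \<Rightarrow> b)"
definition LEFT :: "tile \<Rightarrow> label" where "LEFT t = (case t of (a,b,c,d) \<Rightarrow> c)"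
definition BOTTOM :: "tile \<Rightarrow> label" where "BOTTOM t = (case t of (a,b,c,d) \<Rightarrow> d)"

definition SW_det :: "tile set \<Rightarrow> bool" where
  "SW_det S \<longleftrightarrow> (\<forall>t\<in>S. \<forall>u\<in>S. t \<noteq> u \<longrightarrow> \<not> (BOTTOM t = BOTTOM u \<and> LEFT t = LEFT u))"
definition NE_det :: "tile set \<Rightarrow> bool" where
  "NE_det S \<longleftrightarrow> (\<forall>t\<in>S. \<forall>u\<in>S. t \<noteq> u \<longrightarrow> \<not> (TOP t = TOP u \<and> RIGHT t = RIGHT u))"
definition NW_det :: "tile set \<Rightarrow> bool" where
  "NW_det S \<longleftrightarrow> (\<forall>t\<in>S. \<forall>u\<in>S. t \<noteq> u \<longrightarrow> \<not> (TOP t = TOP u \<and> LEFT t = LEFT u))"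
definition SE_det :: "tile set \<Rightarrow> bool" where
  "SE_det S \<longleftrightarrow> (\<forall>t\<in>S. \<forall>u\<in>S. t \<noteq> u \<longrightarrow> \<not> (BOTTOM t = BOTTOM u \<and> RIGHT t = RIGHT u))"

definition hat :: "tile \<Rightarrow> tile" where
  "hat t = (case t of (a,b,c,d) \<Rightarrow> (b,a,d,c))"

definition W :: "nat \<Rightarrow> tile set" where
  "W n = {((1,1,i+1),(1,1,j+1),(1,1,i),(1,1,j)) | i j. 1 \<le> i \<and> i \<le> int n \<and> 1 \<le> j \<and> j \<le> int n}"

definition b :: "nat \<Rightarrow> int \<Rightarrow> tile" where
  "b n i = ((0,0,i+1),(1,1,1),(0,0,i),(1,1,int n))"

definition B' :: "nat \<Rightarrow> tile set" where
  "B' n = {b n i | i. 0 \<le> i \<and> i \<le> int n}"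
definition B :: "nat \<Rightarrow> tile set" where
  "B n = {b n i | i. 0 \<le> i \<and> i \<le> int n - 1}"

definition G :: "nat \<Rightarrow> tile set" where
  "G n = {((0,1,i+1),(1,1,1),(0,0,i),(1,1,int n+1)) | i. 0 \<le> i \<and> i \<le> int n}"
definition Y :: "nat \<Rightarrow> tile set" where
  "Y n = {((0,1,i+1),(1,1,2),(0,1,i),(1,1,int n+1)) | i. 1 \<le> i \<and> i \<le> int n}"
definition A :: "nat \<Rightarrow> tile set" where
  "A n = {((0,0,i+1),(1,1,2),(0,1,i),(1,1,int n)) | i. 1 \<le> i \<and> i \<le> int n}"

definition j :: "nat \<Rightarrow> int \<Rightarrow> int \<Rightarrow> int \<Rightarrow> int \<Rightarrow> tile" where
  "j n k l r s = ((0,k,l),(0,r,s),(0,s,r+int n),(0,l,k+int n))"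

definition JP :: "int \<times> int \<Rightarrow> bool" where
  "JP p \<longleftrightarrow> p \<in> {(0,0),(0,1),(1,1)}"

definition J' :: "nat \<Rightarrow> tile set" where
  "J' n = {j n k l r s | k l r s. JP (k,l) \<and> JP (r,s)}"
definition J :: "nat \<Rightarrow> tile set" where
  "J n = J' n - {j n 0 0 1 1, j n 1 1 0 0}"

definition T' :: "nat \<Rightarrow> tile set" where
  "T' n = W n \<union> B' n \<union> G n \<union> Y n \<union> A n \<union> hat ` B' n \<union> hat ` G n \<union> hat ` Y n
          \<union> hat ` A n \<union> J' n"
definition T :: "nat \<Rightarrow> tile set" where
  "T n = W n \<union> B n \<union> G n \<union> Y n \<union> hat ` B n \<union> hat ` G n \<union> hat ` Y n \<union> J n"

end

theory Submission
  imports Defs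
begin

text \<open>Every tile of \<open>T' n\<close> can be computed from its bottom and left labels, and also
from its top and right labels, by an explicit formula that distinguishes the four
combinations of the leading digits of the two labels (they tell whether the tile comes
from \<open>W\<close>, from \<open>B', G, Y, A\<close>, from their hats, or from \<open>J'\<close>). Hence \<open>T' n\<close>, and its
subset \<open>T n\<close>, are SW- and NE-deterministic. The tiles \<open>j n 0 0 0 0\<close>, \<open>j n 0 1 0 0\<close> and
\<open>j n 0 0 0 1\<close> of \<open>T n\<close> witness the failure of NW- and SE-determinism.\<close>

lemma SW_det_iff_inj_on: "SW_det S \<longleftrightarrow> inj_on (\<lambda>t. (BOTTOM t, LEFT t)) S"
  unfolding SW_det_def inj_on_def by blast

lemma NE_det_iff_inj_on: "NE_det S \<longleftrightarrow> inj_on (\<lambda>t. (TOP t, RIGHT t)) S"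
  unfolding NE_det_def inj_on_def by blast

lemma SW_detI:
  assumes "\<And>t. t \<in> S \<Longrightarrow> f (BOTTOM t) (LEFT t) = t"
  shows "SW_det S"
  unfolding SW_det_iff_inj_on
  by (rule inj_on_inverseI[where g = "case_prod f"]) (simp add: assms)

lemma NE_detI:
  assumes "\<And>t. t \<in> S \<Longrightarrow> f (TOP t) (RIGHT t) = t"
  shows "NE_det S"
  unfolding NE_det_iff_inj_on
  by (rule inj_on_inverseI[where g = "case_prod f"]) (simp add: assms)

lemma SW_det_subset: "SW_det S' \<Longrightarrow> S \<subseteq> S' \<Longrightarrow> SW_det S"
  unfolding SW_det_def by blast

lemma NE_det_subset: "NE_det S' \<Longrightarrow> S \<subseteq> S' \<Longrightarrow> NE_det S"
  unfolding NE_det_def by blast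

lemma NW_det_subset: "NW_det S' \<Longrightarrow> S \<subseteq> S' \<Longrightarrow> NW_det S"
  unfolding NW_det_def by blast

lemma SE_det_subset: "SE_det S' \<Longrightarrow> S \<subseteq> S' \<Longrightarrow> SE_det S"
  unfolding SE_det_def by blast

fun tile_of_SW :: "nat \<Rightarrow> label \<Rightarrow> label \<Rightarrow> tile" where
  "tile_of_SW n (d0, d1, d2) (c0, c1, c2) =
     (if c0 = 1 \<and> d0 = 1 then ((1, 1, c2 + 1), (1, 1, d2 + 1), (c0, c1, c2), (d0, d1, d2))
      else if c0 = 0 \<and> d0 = 1 then
        ((0, if d2 = int n + 1 then 1 else 0, c2 + 1), (1, 1, 1 + c1), (c0, c1, c2), (d0, d1, d2))
      else if c0 = 1 \<and> d0 = 0 then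
        ((1, 1, 1 + d1), (0, if c2 = int n + 1 then 1 else 0, d2 + 1), (c0, c1, c2), (d0, d1, d2))
      else ((0, d2 - int n, d1), (0, c2 - int n, c1), (c0, c1, c2), (d0, d1, d2)))"

fun tile_of_NE :: "nat \<Rightarrow> label \<Rightarrow> label \<Rightarrow> tile" where
  "tile_of_NE n (b0, b1, b2) (a0, a1, a2) =
     (if a0 = 1 \<and> b0 = 1 then ((a0, a1, a2), (b0, b1, b2), (1, 1, a2 - 1), (1, 1, b2 - 1))
      else if a0 = 0 \<and> b0 = 1 then
        ((a0, a1, a2), (b0, b1, b2), (0, if b2 = 2 then 1 else 0, a2 - 1),
         (1, 1, int n + (if a1 = 1 then 1 else 0)))
      else if a0 = 1 \<and> b0 = 0 then
        ((a0, a1, a2), (b0, b1, b2), (1, 1, int n + (if b1 = 1 then 1 else 0)),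
         (0, if a2 = 2 then 1 else 0, b2 - 1))
      else ((a0, a1, a2), (b0, b1, b2), (0, b2, b1 + int n), (0, a2, a1 + int n)))"

lemmas tile_simps = RIGHT_def TOP_def LEFT_def BOTTOM_def hat_def b_def j_def JP_def

lemma tile_of_SW_T':
  assumes "t \<in> T' n"
  shows "tile_of_SW n (BOTTOM t) (LEFT t) = t"
  using assms unfolding T'_def
  by (elim UnE; auto simp: W_def B'_def G_def Y_def A_def J'_def tile_simps)

lemma tile_of_NE_T':
  assumes "t \<in> T' n"
  shows "tile_of_NE n (TOP t) (RIGHT t) = t"
  using assms unfolding T'_def
  by (elim UnE; auto simp: W_def B'_def G_def Y_def A_def J'_def tile_simps)

lemma T_subset_T': "T n \<subseteq> T' n"
proof -
  have "B n \<subseteq> B' n" unfolding B_def B'_def by auto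
  moreover have "J n \<subseteq> J' n" unfolding J_def by auto
  ultimately show ?thesis unfolding T_def T'_def by blast
qed

lemma j_in_T:
  assumes "JP (k, l)" "JP (r, s)" "(k, l, r, s) \<notin> {(0, 0, 1, 1), (1, 1, 0, 0)}"
  shows "j n k l r s \<in> T n"
proof -
  have "j n k l r s \<in> J' n" unfolding J'_def using assms(1,2) by blast
  moreover have "j n k l r s \<notin> {j n 0 0 1 1, j n 1 1 0 0}"
    using assms(3) by (auto simp: j_def)
  ultimately show ?thesis unfolding T_def J_def by blast
qed

lemma not_NW_det_T: "\<not> NW_det (T n)"
proof -
  have "j n 0 0 0 0 \<in> T n" "j n 0 1 0 0 \<in> T n"
    by (rule j_in_T; simp add: JP_def)+
  moreover have "j n 0 0 0 0 \<noteq> j n 0 1 0 0"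
    and "TOP (j n 0 0 0 0) = TOP (j n 0 1 0 0)" "LEFT (j n 0 0 0 0) = LEFT (j n 0 1 0 0)"
    by (auto simp: tile_simps)
  ultimately show ?thesis unfolding NW_det_def by blast
qed

lemma not_SE_det_T: "\<not> SE_det (T n)"
proof -
  have "j n 0 0 0 0 \<in> T n" "j n 0 0 0 1 \<in> T n"
    by (rule j_in_T; simp add: JP_def)+
  moreover have "j n 0 0 0 0 \<noteq> j n 0 0 0 1"
    and "BOTTOM (j n 0 0 0 0) = BOTTOM (j n 0 0 0 1)" "RIGHT (j n 0 0 0 0) = RIGHT (j n 0 0 0 1)"
    by (auto simp: tile_simps)
  ultimately show ?thesis unfolding SE_det_def by blast
qed

theorem lemma4p2:
  fixes n :: nat
  assumes "n \<ge> 1"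
  shows "SW_det (T n) \<and> NE_det (T n) \<and> SW_det (T' n) \<and> NE_det (T' n)
       \<and> \<not> NW_det (T n) \<and> \<not> SE_det (T n) \<and> \<not> NW_det (T' n) \<and> \<not> SE_det (T' n)"
proof -
  have SW': "SW_det (T' n)" by (rule SW_detI[where f = "tile_of_SW n"]) (rule tile_of_SW_T')
  have NE': "NE_det (T' n)" by (rule NE_detI[where f = "tile_of_NE n"]) (rule tile_of_NE_T')
  have NW': "\<not> NW_det (T' n)" using not_NW_det_T NW_det_subset T_subset_T' by blast
  have SE': "\<not> SE_det (T' n)" using not_SE_det_T SE_det_subset T_subset_T' by blast
  show ?thesis
    using SW' NE' NW' SE' SW_det_subset[OF SW' T_subset_T'] NE_det_subset[OF NE' T_subset_T']
      not_NW_det_T not_SE_det_T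
    by simp
qed

end
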